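(* For any $r_0>0$ and $0<b\le1/4$ there exists $B>1$ such that for every sequence of disks $D(z_j,r_j)$, $j\in\mathbb{N}$, satisfying $\sum_{|z_j|\le r}r_j\le r/B$ for all $r>0$, and for every point $z\notin D(r_0)$, there is $r_z$ with $0<r_z\le b|z|$ such that the circle $\partial D(z,r_z)$ does not intersect $\bigcup_{j\in\mathbb{N}}D(z_j,r_j)$.
   Context: $D(z,r)=\{w:|w-z|<r\}$, $D(r)=D(0,r)$. *)

theory Defs
  imports "HOL-Analysis.Analysis"
begin

end

theory Submission
  imports Defs
begin

text \<open>
  Put \<open>n = |z|\<close>. A circle \<open>\<partial>D(z,t)\<close> can only meet \<open>D(z\<^sub>j,r\<^sub>j)\<close> if \<open>t\<close> lies in the interval of
  length \<open>2r\<^sub>j\<close> around \<open>|z\<^sub>j - z|\<close>. For the disks with \<open>|z\<^sub>j| \<le> 2n\<close> these intervals have total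
  length at most \<open>4n/B < bn\<close>, so they cannot cover \<open>(0, bn]\<close>. Every other disk has
  \<open>r\<^sub>j \<le> |z\<^sub>j|/B\<close>, hence lies outside \<open>D(2|z\<^sub>j|/3)\<close>, which contains \<open>D(z, bn)\<close>.
\<close>

lemma interval_not_covered_by_balls:
  fixes c rs :: "nat \<Rightarrow> real"
  assumes nonneg: "\<And>j. j \<in> J \<Longrightarrow> 0 \<le> rs j" and sum: "(rs has_sum S) J" and "2 * S < L"
  shows "\<exists>t\<in>{0<..L}. \<forall>j\<in>J. t \<notin> ball (c j) (rs j)"
proof (rule ccontr)
  define I where "I j = (if j \<in> J then ball (c j) (rs j) else {})" for j
  define g where "g j = (if j \<in> J then rs j else 0)" for j
  assume "\<not> ?thesis"
  then have cover: "{0<..L} \<subseteq> (\<Union>j. I j)"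
    by (auto simp: I_def)
  have "(g has_sum S) UNIV"
    using sum by (subst has_sum_cong_neutral[where g = rs and T = J]) (auto simp: g_def)
  then have sums: "(\<lambda>j. 2 * g j) sums (2 * S)"
    by (intro sums_mult has_sum_imp_sums)
  have g_nonneg: "0 \<le> g j" for j
    using nonneg by (simp add: g_def)
  have measure_I: "emeasure lborel (I j) = ennreal (2 * g j)" for j
    by (cases "j \<in> J") (simp_all add: I_def g_def ball_eq_greaterThanLessThan nonneg)
  have S_nonneg: "0 \<le> S"
    using sum nonneg has_sum_nonneg by blast
  have "ennreal L = emeasure lborel {0<..L}"
    using S_nonneg \<open>2 * S < L\<close> by simp
  also have "\<dots> \<le> emeasure lborel (\<Union>j. I j)"
    by (rule emeasure_mono[OF cover]) (auto simp: I_def)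
  also have "\<dots> \<le> (\<Sum>j. emeasure lborel (I j))"
    by (rule emeasure_subadditive_countably) (auto simp: I_def)
  also have "\<dots> = ennreal (2 * S)"
    unfolding measure_I by (rule suminf_ennreal_eq) (use sums g_nonneg in auto)
  finally show False
    using S_nonneg \<open>2 * S < L\<close> by (simp add: ennreal_le_iff)
qed

lemma sphere_disjoint_ball_if_radius_outside:
  fixes z c :: "'a :: metric_space"
  assumes "t \<notin> ball (dist c z) r"
  shows "sphere z t \<inter> ball c r = {}"
proof -
  have "t \<in> ball (dist c z) r" if "w \<in> sphere z t" "w \<in> ball c r" for w
    using that dist_triangle[of c z w] dist_triangle[of z w c]
    by (auto simp: dist_real_def dist_commute abs_less_iff)
  then show ?thesis
    using assms by blast
qed

lemma sphere_disjoint_ball_if_norm_separated: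
  fixes z c :: "'a :: real_normed_vector"
  assumes "norm z + t \<le> norm c - r"
  shows "sphere z t \<inter> ball c r = {}"
proof -
  have "norm c - r < norm w" if "dist c w < r" for w
    using that norm_triangle_ineq2[of c w] by (simp add: dist_norm)
  moreover have "norm w \<le> norm z + t" if "dist z w = t" for w
    using that norm_triangle_ineq[of z "w - z"] by (simp add: dist_norm norm_minus_commute)
  ultimately show ?thesis
    using assms by force
qed

lemma sphere_avoiding_balls_of_small_total_radius:
  fixes c :: "nat \<Rightarrow> 'a :: metric_space"
  assumes "\<And>j. j \<in> J \<Longrightarrow> 0 \<le> rs j" and "(rs has_sum S) J" and "2 * S < L"
  shows "\<exists>t\<in>{0<..L}. \<forall>j\<in>J. sphere z t \<inter> ball (c j) (rs j) = {}"
  using interval_not_covered_by_balls[OF assms, where c = "\<lambda>j. dist (c j) z"]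
    sphere_disjoint_ball_if_radius_outside by blast

lemma radius_le_density_bound:
  fixes zs :: "nat \<Rightarrow> 'a :: real_normed_vector"
  assumes nonneg: "\<And>j. 0 \<le> rs j"
    and density: "\<forall>R>0. rs summable_on {j. norm (zs j) \<le> R} \<and>
                      infsum rs {j. norm (zs j) \<le> R} \<le> R / B"
    and "zs k \<noteq> 0"
  shows "rs k \<le> norm (zs k) / B"
proof -
  have "rs k = sum rs {k}"
    by simp
  also have "\<dots> \<le> infsum rs {j. norm (zs j) \<le> norm (zs k)}"
    using density \<open>zs k \<noteq> 0\<close> nonneg by (intro finite_sum_le_infsum) auto
  also have "\<dots> \<le> norm (zs k) / B"
    using density \<open>zs k \<noteq> 0\<close> by simp
  finally show ?thesis .
qed

lemma sphere_avoiding_balls: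
  fixes zs :: "nat \<Rightarrow> 'a :: real_normed_vector"
  assumes nonneg: "\<And>j. 0 \<le> rs j"
    and density: "\<forall>R>0. rs summable_on {j. norm (zs j) \<le> R} \<and>
                      infsum rs {j. norm (zs j) \<le> R} \<le> R / B"
    and "b \<le> 1/4" "3 \<le> B" "4 < b * B" and "z \<noteq> 0"
  shows "\<exists>t. 0 < t \<and> t \<le> b * norm z \<and> sphere z t \<inter> (\<Union>j. ball (zs j) (rs j)) = {}"
proof -
  define n where "n = norm z"
  define J where "J = {j. norm (zs j) \<le> 2 * n}"
  have "n > 0"
    using \<open>z \<noteq> 0\<close> by (simp add: n_def)
  have "rs summable_on J" and sum_J: "infsum rs J \<le> 2 * n / B"
    using density \<open>n > 0\<close> by (auto simp: J_def)
  then have "(rs has_sum infsum rs J) J"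
    by simp
  moreover have "2 * infsum rs J < b * n"
  proof -
    have "2 * infsum rs J \<le> 4 * n / B"
      using sum_J by simp
    also have "\<dots> < b * n"
      using \<open>n > 0\<close> \<open>3 \<le> B\<close> \<open>4 < b * B\<close> by (simp add: field_simps)
    finally show ?thesis .
  qed
  ultimately obtain t where t: "t \<in> {0<..b * n}"
    and near: "\<forall>j\<in>J. sphere z t \<inter> ball (zs j) (rs j) = {}"
    using sphere_avoiding_balls_of_small_total_radius nonneg by blast
  have "sphere z t \<inter> ball (zs j) (rs j) = {}" if "j \<notin> J" for j
  proof -
    from that have far: "2 * n < norm (zs j)"
      by (simp add: J_def)
    then have "zs j \<noteq> 0"
      using \<open>n > 0\<close> by auto
    then have "rs j \<le> norm (zs j) / B"
      by (rule radius_le_density_bound[OF nonneg density])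
    also have "\<dots> \<le> norm (zs j) / 3"
      using \<open>3 \<le> B\<close> by (intro divide_left_mono) auto
    finally have "rs j \<le> norm (zs j) / 3" .
    moreover have "b * n \<le> n / 4"
      using \<open>b \<le> 1/4\<close> \<open>n > 0\<close> by simp
    ultimately have "n + t \<le> norm (zs j) - rs j"
      using far t by auto
    then show ?thesis
      by (simp add: n_def sphere_disjoint_ball_if_norm_separated)
  qed
  then show ?thesis
    using t near by (auto simp: n_def)
qed

theorem mainTheorem16:
  fixes r0 b :: real
  assumes "r0 > 0" and "0 < b" and "b \<le> 1/4"
  shows "\<exists>B>1. \<forall>(zs :: nat \<Rightarrow> complex) (rs :: nat \<Rightarrow> real).
           (\<forall>j. rs j > 0) \<longrightarrow>
           (\<forall>r>0. rs summable_on {j. norm (zs j) \<le> r} \<and>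
                  infsum rs {j. norm (zs j) \<le> r} \<le> r / B) \<longrightarrow>
           (\<forall>z. z \<notin> ball 0 r0 \<longrightarrow>
              (\<exists>rz. 0 < rz \<and> rz \<le> b * norm z \<and>
                    sphere z rz \<inter> (\<Union>j. ball (zs j) (rs j)) = {}))"
proof (rule exI[of _ "5 / b"], intro conjI allI impI)
  have "3 \<le> 5 / b"
    using assms by (simp add: field_simps)
  then show "1 < 5 / b"
    by simp
  fix zs :: "nat \<Rightarrow> complex" and rs :: "nat \<Rightarrow> real" and z :: complex
  assume "\<forall>j. rs j > 0" and "\<forall>r>0. rs summable_on {j. norm (zs j) \<le> r} \<and>
                  infsum rs {j. norm (zs j) \<le> r} \<le> r / (5 / b)"
    and "z \<notin> ball 0 r0"
  moreover have "4 < b * (5 / b)" and "z \<noteq> 0"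
    using assms \<open>z \<notin> ball 0 r0\<close> by auto
  ultimately show "\<exists>rz. 0 < rz \<and> rz \<le> b * norm z \<and>
                    sphere z rz \<inter> (\<Union>j. ball (zs j) (rs j)) = {}"
    using \<open>b \<le> 1/4\<close> \<open>3 \<le> 5 / b\<close> by (intro sphere_avoiding_balls) (auto intro: less_imp_le)
qed

end
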